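(* Let $d\ge 2$, $m>1$, $0\le s\le m-1$ and $t$ be integers with $\gcd(d,t)=1$ and $ds\equiv -t\pmod m$, and let $a$ be an indeterminate. Then for $0\le k\le s$, \[ \frac{(aq^t;q^d)_{s-k}}{(q^d/a;q^d)_{s-k}}\equiv (-a)^{s-2k}q^{s(ds-d+2t)/2+(d-t)k}\frac{(aq^t;q^d)_k}{(q^d/a;q^d)_k}\pmod{\Phi_m(q)}. \]
   Context: For an indeterminate $q$, $(x;q)_k=(1-x)(1-xq)\cdots(1-xq^{k-1})$ (with $(x;q)_0=1$). $\Phi_m(q)$ is the $m$-th cyclotomic polynomial in $q$. A congruence $A\equiv B\pmod{\Phi_m(q)}$ between rational functions in $q$ and $a$ means that $A-B$, written as a quotient of polynomials with denominator coprime to $\Phi_m(q)$, has numerator divisible by $\Phi_m(q)$. *)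

theory Defs
  imports Complex_Main "HOL-Computational_Algebra.Computational_Algebra" "HOL-Number_Theory.Cong"
begin

text \<open>The outer polynomial variable is q, the inner (coefficient) variable is a.\<close>
type_synonym ratfun = "complex poly poly fract"

definition cyclo :: "nat \<Rightarrow> complex poly" where
  "cyclo m = (\<Prod>k\<in>{k. k < m \<and> coprime k m}. [:- cis (2 * pi * real k / real m), 1:])"

definition cycloQ :: "nat \<Rightarrow> complex poly poly" where
  "cycloQ m = map_poly (\<lambda>c. [:c:]) (cyclo m)"

definition qvar :: ratfun where "qvar = Fract [:0, 1:] 1"
definition avar :: ratfun where "avar = Fract [:[:0, 1:]:] 1"

definition qpoch :: "ratfun \<Rightarrow> ratfun \<Rightarrow> nat \<Rightarrow> ratfun" where
  "qpoch x b n = (\<Prod>j<n. 1 - x * b ^ j)"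

definition cong_cyclo :: "ratfun \<Rightarrow> ratfun \<Rightarrow> nat \<Rightarrow> bool" where
  "cong_cyclo A B m \<longleftrightarrow>
     (\<exists>N D. D \<noteq> 0 \<and> A - B = Fract N D \<and> coprime D (cycloQ m) \<and> cycloQ m dvd N)"

end

theory Submission
  imports Defs
begin

(* Modulo \<Phi>_m(q) one may put q := \<zeta> for the primitive m-th roots of unity \<zeta>, which are
   simple roots of \<Phi>_m; since a is transcendental over C, all denominators stay nonzero.
   At such \<zeta> the congruence becomes an exact identity in C(a): as d s \<equiv> -t (mod m),
   q^t = u^(-s) with u = q^d, and the reflection 1 - a u^(-i) = -a u^(-i) (1 - u^i / a)
   matches numerator factors of (a u^(-s); u)_n with denominator factors of (u/a; u)_n.
   This gives (a u^(-s); u)_s / (u/a; u)_s = (-a)^s u^(-s(s+1)/2), and moving k factors from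
   one end to the other multiplies the ratio by u^(s+1) / a^2 each time. *)

definition q_pochhammer :: "'a::comm_ring_1 \<Rightarrow> 'a \<Rightarrow> nat \<Rightarrow> 'a" where
  "q_pochhammer x b n = (\<Prod>j<n. 1 - x * b ^ j)"

lemma q_pochhammer_0 [simp]: "q_pochhammer x b 0 = 1"
  by (simp add: q_pochhammer_def)

lemma q_pochhammer_Suc: "q_pochhammer x b (Suc n) = q_pochhammer x b n * (1 - x * b ^ n)"
  by (simp add: q_pochhammer_def)

lemma q_pochhammer_Suc_shift: "q_pochhammer x b (Suc n) = (1 - x) * q_pochhammer (x * b) b n"
  unfolding q_pochhammer_def prod.lessThan_Suc_shift by (simp add: mult_ac)

lemma q_pochhammer_divide_nonzero:
  fixes \<beta> u :: "'a::field"
  assumes "\<beta> \<noteq> 0" and "\<And>j. \<beta> \<noteq> u ^ j"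
  shows "q_pochhammer (u / \<beta>) u n \<noteq> 0"
  using assms(1) assms(2)[of "Suc _"] by (auto simp: q_pochhammer_def field_simps)

lemma one_minus_power_int_reflect:
  fixes \<beta> u :: "'a::field"
  assumes "\<beta> \<noteq> 0" "u \<noteq> 0"
  shows "1 - \<beta> * u powi i = - \<beta> * u powi i * (1 - u powi (- i) / \<beta>)"
  using assms unfolding power_int_minus power_int_of_nat by (simp add: field_simps)

lemma q_pochhammer_reflect:
  fixes \<beta> u :: "'a::field"
  assumes "\<beta> \<noteq> 0" "u \<noteq> 0"
  shows "q_pochhammer (\<beta> * u powi (- int s)) u s
    = (- \<beta>) ^ s * u powi (- int (s * (s + 1) div 2)) * q_pochhammer (u / \<beta>) u s"
proof (induction s)
  case 0
  then show ?case by simp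
next
  case (Suc s)
  have triangle: "Suc s * (Suc s + 1) div 2 = Suc s + s * (s + 1) div 2"
    by simp
  have "\<beta> * u powi (- int (Suc s)) * u = \<beta> * u powi (- int s)"
    using assms unfolding power_int_minus power_int_of_nat by (simp add: field_simps)
  then have "q_pochhammer (\<beta> * u powi (- int (Suc s))) u (Suc s)
      = (1 - \<beta> * u powi (- int (Suc s))) * q_pochhammer (\<beta> * u powi (- int s)) u s"
    by (simp only: q_pochhammer_Suc_shift)
  also have "\<dots> = (- \<beta> * u powi (- int (Suc s)) * (1 - u powi int (Suc s) / \<beta>))
      * ((- \<beta>) ^ s * u powi (- int (s * (s + 1) div 2)) * q_pochhammer (u / \<beta>) u s)"
    by (simp only: Suc.IH one_minus_power_int_reflect[OF assms] minus_minus)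
  also have "\<dots> = (- \<beta>) ^ Suc s * (u powi (- int (Suc s)) * u powi (- int (s * (s + 1) div 2)))
      * q_pochhammer (u / \<beta>) u (Suc s)"
    unfolding power_int_of_nat by (simp add: q_pochhammer_Suc)
  also have "u powi (- int (Suc s)) * u powi (- int (s * (s + 1) div 2))
      = u powi (- int (Suc s * (Suc s + 1) div 2))"
    using assms unfolding triangle by (simp add: power_int_add[symmetric] algebra_simps)
  finally show ?case .
qed

lemma q_pochhammer_shifted_Suc:
  fixes \<beta> u :: "'a::field"
  assumes "\<beta> \<noteq> 0" "u \<noteq> 0"
  shows "q_pochhammer (\<beta> * u powi (- int s)) u (Suc n)
    = q_pochhammer (\<beta> * u powi (- int s)) u n
      * (- \<beta> * u powi (int n - int s)) * (1 - u powi (int s - int n) / \<beta>)"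
proof -
  have "\<beta> * u powi (- int s) * u ^ n = \<beta> * u powi (int n - int s)"
    using assms by (simp add: power_int_diff power_int_minus field_simps)
  then show ?thesis
    by (simp only: q_pochhammer_Suc one_minus_power_int_reflect[OF assms] mult.assoc minus_diff_eq)
qed

lemma q_pochhammer_reflection_ratio:
  fixes \<beta> u :: "'a::field" and s :: nat
  assumes \<beta>: "\<beta> \<noteq> 0" and u: "u \<noteq> 0" and \<beta>_not_power: "\<And>j. \<beta> \<noteq> u ^ j"
  defines "f n \<equiv> q_pochhammer (\<beta> * u powi (- int s)) u n / q_pochhammer (u / \<beta>) u n"
    and "c j \<equiv> (- \<beta>) powi (int s - 2 * int j) * u powi (int ((s + 1) * j) - int (s * (s + 1) div 2))"
  shows "k \<le> s \<Longrightarrow> f (s - k) = c k * f k"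
proof (induction k)
  case 0
  then show ?case
    using q_pochhammer_reflect[OF \<beta> u, of s] q_pochhammer_divide_nonzero[OF \<beta> \<beta>_not_power, of s]
    by (simp add: f_def c_def)
next
  case (Suc k)
  define n where "n = s - Suc k"
  define G where "G i = 1 - u powi i / \<beta>" for i
  have G_nonzero: "G i \<noteq> 0" if "i \<ge> 0" for i
    using \<beta> \<beta>_not_power[of "nat i"] that by (auto simp: G_def field_simps power_int_def)
  have step: "f (Suc m) = f m * (- \<beta> * u powi (int m - int s)) * G (int s - int m) / G (int (Suc m))" for m
    unfolding f_def G_def q_pochhammer_shifted_Suc[OF \<beta> u] q_pochhammer_Suc[of "u / \<beta>"]
      power_int_of_nat
    by (simp add: ac_simps)
  (* One factor moves across at each end: the reflected factors contribute
     (-\<beta> X) (-\<beta> Y) = \<beta>^2 / Z, while the G-factors cancel. *)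
  define X where "X = u powi (- int (Suc k))"
  define Y where "Y = u powi (int k - int s)"
  define Z where "Z = u powi (int s + 1)"
  have XYZ: "X * Y * Z = 1"
    using u by (simp add: X_def Y_def Z_def power_int_add[symmetric])
  have X: "X \<noteq> 0"
    using u by (simp add: X_def)
  have G1: "G (int (Suc k)) \<noteq> 0" and G2: "G (int (s - k)) \<noteq> 0"
    by (simp_all add: G_nonzero)
  have "c k * f k = f (Suc n)"
    using Suc by (simp add: n_def Suc_diff_Suc)
  also have "\<dots> = f n * (- \<beta> * X) * G (int (Suc k)) / G (int (s - k))"
    using step[of n] Suc.prems by (simp add: X_def n_def)
  finally have "f n = c k * f k * G (int (s - k)) / ((- \<beta> * X) * G (int (Suc k)))"
    using \<beta> X G1 G2 by (simp add: field_simps)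
  also have "\<dots> = c k * Z / \<beta> ^ 2 * (f k * (- \<beta> * Y) * G (int (s - k)) / G (int (Suc k)))"
    using \<beta> X G1 G2 XYZ by (simp add: field_simps power2_eq_square)
  also have "f k * (- \<beta> * Y) * G (int (s - k)) / G (int (Suc k)) = f (Suc k)"
    using step[of k] Suc.prems by (simp add: Y_def)
  also have "c k * Z / \<beta> ^ 2 = c (Suc k)"
    using \<beta> u by (simp add: c_def Z_def power_int_diff power_int_add algebra_simps)
  finally show ?case
    by (simp add: n_def)
qed

lemma power_int_root_of_unity_dvd:
  fixes w :: "'a::field"
  assumes "w ^ m = 1" and "int m dvd i"
  shows "w powi i = 1"
proof -
  obtain c where "i = int m * c"
    using assms(2) by (elim dvdE)
  then show ?thesis
    using assms(1) by (simp add: power_int_mult)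
qed

lemma q_pochhammer_reflection_root_of_unity:
  fixes w \<beta> :: "'a::field" and d t :: int and m s k :: nat
  assumes w: "w ^ m = 1" "m > 0" and \<beta>: "\<beta> \<noteq> 0" "\<And>j. \<beta> \<noteq> (w powi d) ^ j"
    and dst: "[d * int s = - t] (mod int m)" and "k \<le> s"
  shows "q_pochhammer (\<beta> * w powi t) (w powi d) (s - k) / q_pochhammer (w powi d / \<beta>) (w powi d) (s - k)
     = (- \<beta>) powi (int s - 2 * int k) * w powi (int s * (d * int s - d + 2 * t) div 2 + (d - t) * int k)
       * (q_pochhammer (\<beta> * w powi t) (w powi d) k / q_pochhammer (w powi d / \<beta>) (w powi d) k)"
proof -
  define T where "T = s * (s + 1) div 2"
  have w0: "w \<noteq> 0"
    using w by (auto simp: power_0_left)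
  have dvd: "int m dvd d * int s + t"
    using dst by (simp add: cong_iff_dvd_diff)
  have "w powi t = (w powi d) powi (- int s) * w powi (d * int s + t)"
    using w0 by (simp add: power_int_add[symmetric] power_int_mult[symmetric])
  then have wt: "w powi t = (w powi d) powi (- int s)"
    using power_int_root_of_unity_dvd[OF w(1) dvd] by simp
  have "2 * T = s * (s + 1)"
    by (simp add: T_def)
  then have two_T: "2 * int T = int s * (int s + 1)"
    by (metis of_nat_1 of_nat_add of_nat_mult of_nat_numeral)
  then have "int s * (d * int s - d + 2 * t) = 2 * (d * int T - d * int s + t * int s)"
    by (simp add: algebra_simps)
  then have "int s * (d * int s - d + 2 * t) div 2 + (d - t) * int k
      = d * int T - d * int s + t * int s + (d - t) * int k"
    by simp
  also have "\<dots> = d * (int ((s + 1) * k) - int T) + (d * int s + t) * (int s - int k)"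
    using two_T by (simp add: algebra_simps)
  finally have wE: "w powi (int s * (d * int s - d + 2 * t) div 2 + (d - t) * int k)
      = (w powi d) powi (int ((s + 1) * k) - int T)"
    using w0 power_int_root_of_unity_dvd[OF w(1) dvd_mult2[OF dvd]]
    by (simp add: power_int_add power_int_mult)
  have "w powi d \<noteq> 0"
    using w0 by simp
  then show ?thesis
    unfolding wt wE T_def by (rule q_pochhammer_reflection_ratio[OF \<beta>(1) _ \<beta>(2) \<open>k \<le> s\<close>])
qed

(* q is the outer variable of C[a][q], so substituting q := z means evaluating at the constant
   polynomial [:z:]; the value V z lies in C(a). *)
definition specializes_on :: "complex set \<Rightarrow> ratfun \<Rightarrow> (complex \<Rightarrow> complex poly fract) \<Rightarrow> bool" where
  "specializes_on P x V \<longleftrightarrow> (\<exists>N D. D \<noteq> 0 \<and> x = Fract N D \<and>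
     (\<forall>z\<in>P. poly D [:z:] \<noteq> 0 \<and> V z = Fract (poly N [:z:]) (poly D [:z:])))"

lemma specializes_onI:
  assumes "D \<noteq> 0" "x = Fract N D"
    and "\<And>z. z \<in> P \<Longrightarrow> poly D [:z:] \<noteq> 0 \<and> V z = Fract (poly N [:z:]) (poly D [:z:])"
  shows "specializes_on P x V"
  using assms unfolding specializes_on_def by blast

lemma specializes_onE:
  assumes "specializes_on P x V"
  obtains N D where "x = Fract N D" "D \<noteq> 0"
    "\<And>z. z \<in> P \<Longrightarrow> poly D [:z:] \<noteq> 0 \<and> V z = Fract (poly N [:z:]) (poly D [:z:])"
  using assms unfolding specializes_on_def by blast

lemma specializes_on_cong:
  "specializes_on P x V \<Longrightarrow> (\<And>z. z \<in> P \<Longrightarrow> V z = W z) \<Longrightarrow> specializes_on P x W"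
  unfolding specializes_on_def by metis

lemma specializes_on_Fract_1: "specializes_on P (Fract N 1) (\<lambda>z. Fract (poly N [:z:]) 1)"
  by (rule specializes_onI[of 1 _ N]) simp_all

lemma specializes_on_1: "specializes_on P 1 (\<lambda>z. 1)"
  using specializes_on_Fract_1[of P 1] by (simp add: One_fract_def)

lemma specializes_on_add:
  assumes "specializes_on P x X" "specializes_on P y Y"
  shows "specializes_on P (x + y) (\<lambda>z. X z + Y z)"
proof -
  obtain N1 D1 N2 D2 where "x = Fract N1 D1" "D1 \<noteq> 0"
      "\<And>z. z \<in> P \<Longrightarrow> poly D1 [:z:] \<noteq> 0 \<and> X z = Fract (poly N1 [:z:]) (poly D1 [:z:])"
    and "y = Fract N2 D2" "D2 \<noteq> 0"
      "\<And>z. z \<in> P \<Longrightarrow> poly D2 [:z:] \<noteq> 0 \<and> Y z = Fract (poly N2 [:z:]) (poly D2 [:z:])"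
    using assms by (metis specializes_onE)
  then show ?thesis
    by (intro specializes_onI[of "D1 * D2" _ "N1 * D2 + N2 * D1"]) auto
qed

lemma specializes_on_mult:
  assumes "specializes_on P x X" "specializes_on P y Y"
  shows "specializes_on P (x * y) (\<lambda>z. X z * Y z)"
proof -
  obtain N1 D1 N2 D2 where "x = Fract N1 D1" "D1 \<noteq> 0"
      "\<And>z. z \<in> P \<Longrightarrow> poly D1 [:z:] \<noteq> 0 \<and> X z = Fract (poly N1 [:z:]) (poly D1 [:z:])"
    and "y = Fract N2 D2" "D2 \<noteq> 0"
      "\<And>z. z \<in> P \<Longrightarrow> poly D2 [:z:] \<noteq> 0 \<and> Y z = Fract (poly N2 [:z:]) (poly D2 [:z:])"
    using assms by (metis specializes_onE)
  then show ?thesis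
    by (intro specializes_onI[of "D1 * D2" _ "N1 * N2"]) auto
qed

lemma specializes_on_minus:
  assumes "specializes_on P x X"
  shows "specializes_on P (- x) (\<lambda>z. - X z)"
  using assms by (elim specializes_onE) (intro specializes_onI, auto)

lemma specializes_on_diff:
  assumes "specializes_on P x X" "specializes_on P y Y"
  shows "specializes_on P (x - y) (\<lambda>z. X z - Y z)"
  using specializes_on_add[OF assms(1) specializes_on_minus[OF assms(2)]] by simp

lemma specializes_on_inverse:
  assumes "specializes_on P x X" "\<And>z. z \<in> P \<Longrightarrow> X z \<noteq> 0"
  shows "specializes_on P (inverse x) (\<lambda>z. inverse (X z))"
proof -
  obtain N D where ND: "x = Fract N D" "D \<noteq> 0"
      "\<And>z. z \<in> P \<Longrightarrow> poly D [:z:] \<noteq> 0 \<and> X z = Fract (poly N [:z:]) (poly D [:z:])"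
    using assms(1) by (metis specializes_onE)
  have N: "poly N [:z:] \<noteq> 0" if "z \<in> P" for z
    using ND(3)[OF that] assms(2)[OF that] by (auto simp: fract_collapse)
  show ?thesis
  proof (cases "N = 0")
    case True
    then have "P = {}"
      using N by auto
    then show ?thesis
      using ND True by (intro specializes_onI[of 1 _ 0]) (simp_all add: fract_collapse)
  next
    case False
    then show ?thesis
      using ND N by (intro specializes_onI[of N _ D]) auto
  qed
qed

lemma specializes_on_divide:
  assumes "specializes_on P x X" "specializes_on P y Y" "\<And>z. z \<in> P \<Longrightarrow> Y z \<noteq> 0"
  shows "specializes_on P (x / y) (\<lambda>z. X z / Y z)"
  using specializes_on_mult[OF assms(1) specializes_on_inverse[OF assms(2,3)]]
  by (simp add: divide_inverse)

lemma specializes_on_power: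
  assumes "specializes_on P x X"
  shows "specializes_on P (x ^ n) (\<lambda>z. X z ^ n)"
  by (induction n) (simp_all add: specializes_on_1 specializes_on_mult[OF assms])

lemma specializes_on_power_int:
  assumes "specializes_on P x X" "\<And>z. z \<in> P \<Longrightarrow> X z \<noteq> 0"
  shows "specializes_on P (x powi i) (\<lambda>z. X z powi i)"
  unfolding power_int_def
  using specializes_on_power[OF assms(1)] specializes_on_power[OF specializes_on_inverse[OF assms]]
  by (cases "0 \<le> i") auto

lemma specializes_on_q_pochhammer:
  assumes "specializes_on P x X" "specializes_on P b B"
  shows "specializes_on P (q_pochhammer x b n) (\<lambda>z. q_pochhammer (X z) (B z) n)"
proof (induction n)
  case 0
  then show ?case
    using specializes_on_1 by simp
next
  case (Suc n)
  then show ?case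
    unfolding q_pochhammer_Suc
    by (intro specializes_on_mult specializes_on_diff specializes_on_1 assms specializes_on_power)
qed

lemma map_poly_const_poly_mult:
  fixes p q :: "'a::comm_ring_1 poly"
  shows "map_poly (\<lambda>c. [:c:]) (p * q) = map_poly (\<lambda>c. [:c:]) p * map_poly (\<lambda>c. [:c:]) q"
proof (induction p)
  case 0
  then show ?case by simp
next
  case (pCons a p)
  have "map_poly (\<lambda>c. [:c:]) (smult a q) = smult [:a:] (map_poly (\<lambda>c. [:c:]) q)"
    by (rule map_poly_smult) (simp_all add: mult.commute)
  moreover have "map_poly (\<lambda>c. [:c:]) (x + y) = map_poly (\<lambda>c. [:c:]) x + map_poly (\<lambda>c. [:c:]) y"
    for x y :: "'a poly"
    by (rule poly_eqI) (simp add: coeff_map_poly)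
  ultimately show ?case
    by (simp add: map_poly_pCons pCons.IH)
qed

lemma map_poly_const_poly_prod:
  fixes f :: "'b \<Rightarrow> 'a::comm_ring_1 poly"
  shows "map_poly (\<lambda>c. [:c:]) (\<Prod>k\<in>K. f k) = (\<Prod>k\<in>K. map_poly (\<lambda>c. [:c:]) (f k))"
  by (induction K rule: infinite_finite_induct) (simp_all add: map_poly_const_poly_mult)

lemma prod_linear_dvd_if_roots:
  fixes c :: "'b \<Rightarrow> 'a::idom"
  assumes "finite K" "inj_on c K" "\<And>k. k \<in> K \<Longrightarrow> poly p (c k) = 0"
  shows "(\<Prod>k\<in>K. [:- c k, 1:]) dvd p"
  using assms
proof (induction K arbitrary: p rule: finite_induct)
  case empty
  then show ?case by simp
next
  case (insert k K)
  obtain p' where p': "p = [:- c k, 1:] * p'"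
    using insert.prems(2)[of k] by (auto simp: poly_eq_0_iff_dvd)
  have "poly p' (c j) = 0" if "j \<in> K" for j
  proof -
    have "c j \<noteq> c k"
      using insert.prems(1) insert.hyps(2) that unfolding inj_on_def by blast
    moreover have "(c j - c k) * poly p' (c j) = 0"
      using insert.prems(2)[of j] that by (auto simp: p')
    ultimately show ?thesis
      by simp
  qed
  then have "(\<Prod>k\<in>K. [:- c k, 1:]) dvd p'"
    using insert.IH insert.prems(1) by simp
  then show ?case
    unfolding p' prod.insert[OF insert.hyps] by (rule mult_dvd_mono[OF dvd_refl])
qed

lemma dvd_linear_cancel:
  fixes g p :: "'a::idom poly"
  assumes "g dvd [:- c, 1:] * p" "poly g c \<noteq> 0"
  shows "g dvd p"
proof -
  obtain r where r: "[:- c, 1:] * p = g * r"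
    using assms(1) by (elim dvdE)
  have "poly g c * poly r c = 0"
    using arg_cong[OF r, of "\<lambda>p. poly p c"] by simp
  then obtain r' where r': "r = [:- c, 1:] * r'"
    using assms(2) by (auto simp: poly_eq_0_iff_dvd)
  have "[:- c, 1:] * p = [:- c, 1:] * (g * r')"
    using r r' by (simp add: mult.left_commute)
  then have "p = g * r'"
    by (subst (asm) mult_cancel_left) simp
  then show ?thesis
    by simp
qed

lemma coprime_prod_linear_if_nonroots:
  fixes c :: "'b \<Rightarrow> 'a::idom_divide"
  assumes "finite K" "\<And>k. k \<in> K \<Longrightarrow> poly p (c k) \<noteq> 0"
  shows "coprime p (\<Prod>k\<in>K. [:- c k, 1:])"
proof (rule coprimeI)
  fix g
  assume "g dvd p" and g_dvd_prod: "g dvd (\<Prod>k\<in>K. [:- c k, 1:])"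
  have "poly g (c k) \<noteq> 0" if "k \<in> K" for k
    using \<open>g dvd p\<close> assms(2)[OF that] by (metis dvd_trans poly_eq_0_iff_dvd)
  with assms(1) g_dvd_prod show "is_unit g"
  proof (induction K rule: finite_induct)
    case empty
    then show ?case by simp
  next
    case (insert k K)
    have "g dvd [:- c k, 1:] * (\<Prod>k\<in>K. [:- c k, 1:])"
      using insert.prems(1) insert.hyps by simp
    then have "g dvd (\<Prod>k\<in>K. [:- c k, 1:])"
      by (rule dvd_linear_cancel) (use insert.prems(2) in simp)
    then show ?case
      using insert.IH insert.prems(2) by simp
  qed
qed

lemma Fract_eq_0_iff: "b \<noteq> 0 \<Longrightarrow> Fract a b = (0 :: 'a::idom fract) \<longleftrightarrow> a = 0"
  by (simp add: Zero_fract_def eq_fract)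

definition cyclo_roots :: "nat \<Rightarrow> complex set" where
  "cyclo_roots m = (\<lambda>k. cis (2 * pi * real k / real m)) ` {k. k < m \<and> coprime k m}"

lemma cyclo_roots_unity: "m > 0 \<Longrightarrow> z \<in> cyclo_roots m \<Longrightarrow> z ^ m = 1"
  using bij_betw_roots_unity[of m] by (auto simp: cyclo_roots_def bij_betw_def)

lemma cycloQ_eq_prod:
  "cycloQ m = (\<Prod>k\<in>{k. k < m \<and> coprime k m}. [:- [:cis (2 * pi * real k / real m):], 1:])"
  unfolding cycloQ_def cyclo_def map_poly_const_poly_prod
  by (rule prod.cong) (simp_all add: map_poly_pCons)

lemma cong_cyclo_if_specializes_on_cyclo_roots:
  assumes "m > 0" and "specializes_on (cyclo_roots m) (A - B) (\<lambda>_. 0)"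
  shows "cong_cyclo A B m"
proof -
  define K where "K = {k. k < m \<and> coprime k m}"
  define \<zeta> where "\<zeta> k = [:cis (2 * pi * real k / real m):]" for k
  obtain N D where ND: "A - B = Fract N D" "D \<noteq> 0"
    and at_roots: "\<And>z. z \<in> cyclo_roots m \<Longrightarrow> poly D [:z:] \<noteq> 0 \<and> 0 = Fract (poly N [:z:]) (poly D [:z:])"
    using assms(2) by (metis specializes_onE)
  have "inj_on \<zeta> K"
    using bij_betw_roots_unity[OF assms(1)]
    by (auto simp: \<zeta>_def K_def bij_betw_def inj_on_def)
  moreover have "finite K"
    by (simp add: K_def)
  moreover have "poly D (\<zeta> k) \<noteq> 0" and "poly N (\<zeta> k) = 0" if "k \<in> K" for k
    using at_roots[of "cis (2 * pi * real k / real m)"] that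
    by (auto simp: \<zeta>_def K_def cyclo_roots_def Fract_eq_0_iff)
  ultimately have "coprime D (cycloQ m)" and "cycloQ m dvd N"
    unfolding cycloQ_eq_prod K_def[symmetric] \<zeta>_def[symmetric]
    by (simp_all add: coprime_prod_linear_if_nonroots prod_linear_dvd_if_roots)
  then show ?thesis
    unfolding cong_cyclo_def using ND by blast
qed

definition const_fract :: "complex \<Rightarrow> complex poly fract" where
  "const_fract z = Fract [:z:] 1"

definition indet_fract :: "complex poly fract" where
  "indet_fract = Fract [:0, 1:] 1"

lemma const_fract_eq_0_iff [simp]: "const_fract z = 0 \<longleftrightarrow> z = 0"
  by (simp add: const_fract_def Fract_eq_0_iff)

lemma const_fract_1 [simp]: "const_fract 1 = 1"
  by (simp add: const_fract_def One_fract_def pCons_one)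

lemma const_fract_power: "const_fract z ^ n = const_fract (z ^ n)"
  by (induction n) (simp_all add: const_fract_def One_fract_def pCons_one mult.commute)

lemma const_fract_power_int:
  assumes "z \<noteq> 0"
  shows "const_fract z powi i = const_fract (z powi i)"
proof -
  have "inverse (const_fract z) = const_fract (inverse z)"
    using assms by (simp add: const_fract_def eq_fract)
  then show ?thesis
    unfolding power_int_def by (cases "0 \<le> i") (simp_all add: const_fract_power)
qed

lemma indet_fract_nonzero [simp]: "indet_fract \<noteq> 0"
  by (simp add: indet_fract_def Fract_eq_0_iff)

lemma indet_fract_not_power:
  assumes "z \<noteq> 0"
  shows "indet_fract \<noteq> (const_fract z powi d) ^ j"
proof -
  have "(const_fract z powi d) ^ j = const_fract ((z powi d) ^ j)"
    using assms by (simp add: const_fract_power_int const_fract_power)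
  then show ?thesis
    by (simp add: const_fract_def indet_fract_def eq_fract)
qed

lemma specializes_on_qvar: "specializes_on P qvar const_fract"
  using specializes_on_Fract_1[of P "[:0, 1:]"] by (simp add: qvar_def const_fract_def[abs_def])

lemma specializes_on_avar: "specializes_on P avar (\<lambda>_. indet_fract)"
  using specializes_on_Fract_1[of P "[:[:0, 1:]:]"] by (simp add: avar_def indet_fract_def)

lemma specializes_on_qpoch_ratio:
  assumes "0 \<notin> P"
  shows "specializes_on P
      (qpoch (avar * qvar powi t) (qvar powi d) n / qpoch (qvar powi d / avar) (qvar powi d) n)
      (\<lambda>z. q_pochhammer (indet_fract * const_fract z powi t) (const_fract z powi d) n
         / q_pochhammer (const_fract z powi d / indet_fract) (const_fract z powi d) n)"
proof -
  have "qpoch = q_pochhammer"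
    by (simp add: fun_eq_iff qpoch_def q_pochhammer_def)
  moreover have "q_pochhammer (const_fract z powi d / indet_fract) (const_fract z powi d) n \<noteq> 0"
    if "z \<in> P" for z
    using that assms indet_fract_not_power[of z d]
    by (intro q_pochhammer_divide_nonzero) auto
  ultimately show ?thesis
    using assms
    by (auto intro!: specializes_on_divide specializes_on_q_pochhammer specializes_on_mult
        specializes_on_power_int specializes_on_avar specializes_on_qvar)
qed

lemma cong_cyclo_reflection:
  fixes d t :: int and m s k :: nat
  assumes "m > 0" and "[d * int s = - t] (mod int m)" and "k \<le> s"
  shows "cong_cyclo
     (qpoch (avar * qvar powi t) (qvar powi d) (s - k) / qpoch (qvar powi d / avar) (qvar powi d) (s - k))
     ((- avar) powi (int s - 2 * int k)
        * qvar powi (int s * (d * int s - d + 2 * t) div 2 + (d - t) * int k)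
        * (qpoch (avar * qvar powi t) (qvar powi d) k / qpoch (qvar powi d / avar) (qvar powi d) k))
     m" (is "cong_cyclo ?lhs ((- avar) powi ?i * qvar powi ?e * ?r) m")
proof -
  define P where "P = cyclo_roots m"
  define ratio where "ratio z n = q_pochhammer (indet_fract * const_fract z powi t) (const_fract z powi d) n
      / q_pochhammer (const_fract z powi d / indet_fract) (const_fract z powi d) n" for z n
  have roots: "z ^ m = 1" if "z \<in> P" for z
    using cyclo_roots_unity that assms(1) by (simp add: P_def)
  have "0 \<notin> P"
    using roots[of 0] assms(1) by (auto simp: power_0_left)
  then have specialized: "specializes_on P (?lhs - (- avar) powi ?i * qvar powi ?e * ?r)
      (\<lambda>z. ratio z (s - k) - (- indet_fract) powi ?i * const_fract z powi ?e * ratio z k)"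
    unfolding ratio_def
    by (intro specializes_on_diff specializes_on_mult specializes_on_power_int specializes_on_minus
        specializes_on_avar specializes_on_qvar specializes_on_qpoch_ratio)
      auto
  have identity: "ratio z (s - k) = (- indet_fract) powi ?i * const_fract z powi ?e * ratio z k"
    if "z \<in> P" for z
    unfolding ratio_def
    using roots[OF that] assms \<open>0 \<notin> P\<close> that
    by (intro q_pochhammer_reflection_root_of_unity indet_fract_not_power)
      (auto simp: const_fract_power)
  have "specializes_on P (?lhs - (- avar) powi ?i * qvar powi ?e * ?r) (\<lambda>_. 0)"
    by (rule specializes_on_cong[OF specialized]) (simp add: identity)
  then show ?thesis
    using assms(1) by (intro cong_cyclo_if_specializes_on_cyclo_roots) (simp_all add: P_def)
qed

theorem lemma1:
  fixes d t :: int and m s k :: nat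
  assumes "d \<ge> 2" and "m > 1" and "s \<le> m - 1"
    and "gcd d t = 1"
    and "[d * int s = - t] (mod int m)"
    and "k \<le> s"
  shows "cong_cyclo
     (qpoch (avar * qvar powi t) (qvar powi d) (s - k) / qpoch (qvar powi d / avar) (qvar powi d) (s - k))
     ((- avar) powi (int s - 2 * int k)
        * qvar powi (int s * (d * int s - d + 2 * t) div 2 + (d - t) * int k)
        * (qpoch (avar * qvar powi t) (qvar powi d) k / qpoch (qvar powi d / avar) (qvar powi d) k))
     m"
  using assms(2,5,6) by (intro cong_cyclo_reflection) simp_all

end
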